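(* Every subset $X\subseteq\mathbb{Z}_6^2$ with $|X|=13$ contains a subset $S$ with $|S|=6$ and $\sum_{s\in S}s=(0,0)$. Consequently (since the $12$-element set $\{0,1\}\times\mathbb{Z}_6$ contains no such $6$-element zero-sum subset) $g(\mathbb{Z}_6^2)=13$.
   Context: For a finite abelian group $G$, $g(G)$ is the smallest positive integer $t$ such that every subset $X\subseteq G$ with $|X|\ge t$ contains a subset $S$ with $|S|=\exp(G)$ and $\sum_{s\in S}s=0_G$. Here $\exp(\mathbb{Z}_6^2)=6$. *)

theory Defs
  imports Main "HOL-Library.Numeral_Type" "HOL-Library.Product_Plus"
begin

text \<open>The group Z_6^2 is rendered as the product type 6 \<times> 6 (type 6 = integers mod 6,
  with componentwise addition from Product_Plus).\<close>

definition has_zero_sum_subset :: "nat \<Rightarrow> 'a::comm_monoid_add set \<Rightarrow> bool" where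
  "has_zero_sum_subset n X \<longleftrightarrow> (\<exists>S. S \<subseteq> X \<and> card S = n \<and> (\<Sum>s\<in>S. s) = 0)"

definition group_exp :: "'a::{finite,ab_group_add} itself \<Rightarrow> nat" where
  "group_exp T = (LEAST n. n > 0 \<and> (\<forall>x::'a. (\<Sum>i<n. x) = 0))"

definition g_const :: "'a::{finite,ab_group_add} itself \<Rightarrow> nat" where
  "g_const T = (LEAST t. t > 0 \<and>
     (\<forall>X::'a set. card X \<ge> t \<longrightarrow> has_zero_sum_subset (group_exp T) X))"

end

theory Submission
  imports Defs "HOL-Library.Set_Algebras"
begin

text \<open>Via \<open>x \<mapsto> (3x, x mod 3)\<close>, \<open>\<int>\<^sub>6\<^sup>2 \<cong> \<int>\<^sub>2\<^sup>2 \<times> \<int>\<^sub>3\<^sup>2\<close>. Split a 13-set \<open>X\<close> into its four classes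
  over the 2-torsion \<open>{0, 3}\<^sup>2\<close>; on each class reduction mod 3 is injective. A choice of subsets of
  the four classes has 2-torsion part zero as soon as their sizes have equal parity, so it suffices to
  pick, inside four subsets of \<open>\<int>\<^sub>3\<^sup>2\<close> of total size 13, subsets of equal parity and total size 6
  whose elements sum to zero. This is done by a case analysis on the sizes, using lower bounds for
  the sums of two distinct elements of a set, the fact that five points of the affine plane over
  \<open>\<int>\<^sub>3\<close> contain a line, and the structure of pairs of 3-sets with sumset of size at most 4.\<close>

lemma sorted_wlog3:
  fixes f :: "'a \<Rightarrow> 'b::linorder"
  assumes swap12: "\<And>a b c. P b a c \<Longrightarrow> P a b c"
    and swap23: "\<And>a b c. P a c b \<Longrightarrow> P a b c"
    and sorted: "\<And>a b c. f b \<le> f a \<Longrightarrow> f c \<le> f b \<Longrightarrow> P a b c"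
  shows "P a b c"
proof -
  have max_first: "P a b c" if "f b \<le> f a" "f c \<le> f a" for a b c
  proof (cases "f c \<le> f b")
    case True then show ?thesis using that(1) by (rule_tac sorted)
  next
    case False then show ?thesis using that by (rule_tac swap23, rule_tac sorted) auto
  qed
  consider "f b \<le> f a" "f c \<le> f a" | "f a \<le> f b" "f c \<le> f b" | "f a \<le> f c" "f b \<le> f c"
    by (meson le_cases order_trans)
  then show ?thesis
  proof cases
    case 1 then show ?thesis by (rule max_first)
  next
    case 2 then show ?thesis by (rule_tac swap12, rule_tac max_first)
  next
    case 3 then show ?thesis by (rule_tac swap23, rule_tac swap12, rule_tac max_first)
  qed
qed

lemma sorted_wlog4:
  fixes f :: "'a \<Rightarrow> 'b::linorder"
  assumes swap01: "\<And>a b c d. P b a c d \<Longrightarrow> P a b c d"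
    and swap12: "\<And>a b c d. P a c b d \<Longrightarrow> P a b c d"
    and swap23: "\<And>a b c d. P a b d c \<Longrightarrow> P a b c d"
    and sorted: "\<And>a b c d. f b \<le> f a \<Longrightarrow> f c \<le> f b \<Longrightarrow> f d \<le> f c \<Longrightarrow> P a b c d"
  shows "P a b c d"
proof -
  have max_first: "P a b c d" if "f b \<le> f a" "f c \<le> f a" "f d \<le> f a" for a b c d
  proof -
    have "f b \<le> f a \<and> f c \<le> f a \<and> f d \<le> f a \<longrightarrow> P a b c d"
      by (rule sorted_wlog3[where f = f]) (auto intro: swap12 swap23 sorted)
    then show ?thesis using that by blast
  qed
  consider "f b \<le> f a" "f c \<le> f a" "f d \<le> f a" | "f a \<le> f b" "f c \<le> f b" "f d \<le> f b"
    | "f a \<le> f c" "f b \<le> f c" "f d \<le> f c" | "f a \<le> f d" "f b \<le> f d" "f c \<le> f d"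
    by (meson le_cases order_trans)
  then show ?thesis
  proof cases
    case 1 then show ?thesis by (rule max_first)
  next
    case 2 then show ?thesis by (rule_tac swap01, rule_tac max_first)
  next
    case 3 then show ?thesis by (rule_tac swap12, rule_tac swap01, rule_tac max_first)
  next
    case 4 then show ?thesis
      by (rule_tac swap23, rule_tac swap12, rule_tac swap01, rule_tac max_first)
  qed
qed

lemma sum_const_order_two:
  fixes c :: "'a::comm_monoid_add"
  assumes "c + c = 0" and "finite T"
  shows "(\<Sum>x\<in>T. c) = (if even (card T) then 0 else c)"
  using assms(2) by induction (auto simp: assms(1))

lemma exists_add_eq_if_card_gt:
  fixes A B :: "'a::{finite,ab_group_add} set"
  assumes "card A + card B > CARD('a)"
  shows "\<exists>a\<in>A. \<exists>b\<in>B. a + b = t"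
proof (rule ccontr)
  assume none: "\<not> ?thesis"
  have "inj_on (\<lambda>b. t - b) B" by (rule inj_onI) simp
  then have "card ((\<lambda>b. t - b) ` B) = card B" by (rule card_image)
  moreover have "A \<inter> (\<lambda>b. t - b) ` B = {}" using none by (force simp: diff_eq_eq)
  ultimately have "card (A \<union> (\<lambda>b. t - b) ` B) = card A + card B" by (simp add: card_Un_disjoint)
  then show False using assms card_mono[of UNIV "A \<union> (\<lambda>b. t - b) ` B"] by simp
qed

definition restricted_sumset :: "'a::plus set \<Rightarrow> 'a set" where
  "restricted_sumset A = {x + y | x y. x \<in> A \<and> y \<in> A \<and> x \<noteq> y}"

lemma restricted_sumsetI: "x \<in> A \<Longrightarrow> y \<in> A \<Longrightarrow> x \<noteq> y \<Longrightarrow> x + y \<in> restricted_sumset A"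
  unfolding restricted_sumset_def by blast

lemma restricted_sumset_mono: "A \<subseteq> B \<Longrightarrow> restricted_sumset A \<subseteq> restricted_sumset B"
  unfolding restricted_sumset_def by blast

lemma restricted_sumset_obtain_pair:
  fixes A :: "'a::comm_monoid_add set"
  assumes "s \<in> restricted_sumset A"
  obtains P where "P \<subseteq> A" "card P = 2" "\<Sum>P = s"
proof -
  obtain x y where "x \<in> A" "y \<in> A" "x \<noteq> y" "s = x + y"
    using assms unfolding restricted_sumset_def by blast
  then show ?thesis by (intro that[of "{x, y}"]) simp_all
qed

lemma obtain_three_distinct:
  assumes "card A \<ge> 3"
  obtains a b c where "a \<in> A" "b \<in> A" "c \<in> A" "a \<noteq> b" "a \<noteq> c" "b \<noteq> c"
proof -
  obtain A3 where "A3 \<subseteq> A" "card A3 = 3"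
    using obtain_subset_with_card_n[OF assms] by blast
  then show ?thesis using that unfolding card_3_iff by blast
qed

lemma obtain_four_distinct:
  assumes "card A \<ge> 4"
  obtains a b c d where "a \<in> A" "b \<in> A" "c \<in> A" "d \<in> A"
    "a \<noteq> b" "a \<noteq> c" "a \<noteq> d" "b \<noteq> c" "b \<noteq> d" "c \<noteq> d"
proof -
  obtain A4 where A4: "A4 \<subseteq> A" "card A4 = 4"
    using obtain_subset_with_card_n[OF assms] by blast
  then obtain a where a: "a \<in> A4" by fastforce
  then have "card (A4 - {a}) = 3" using A4 by simp
  then obtain b c d where bcd: "A4 - {a} = {b, c, d}" "b \<noteq> c" "c \<noteq> d" "b \<noteq> d"
    unfolding card_3_iff by blast
  then have "b \<in> A4 - {a}" "c \<in> A4 - {a}" "d \<in> A4 - {a}" by auto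
  then have "a \<in> A" "b \<in> A" "c \<in> A" "d \<in> A" "a \<noteq> b" "a \<noteq> c" "a \<noteq> d"
    using A4(1) a by auto
  with bcd(2-4) show ?thesis by (intro that)
qed

lemma card_restricted_sumset_ge_3:
  fixes A :: "'a::{finite,cancel_ab_semigroup_add} set"
  assumes "card A \<ge> 3"
  shows "card (restricted_sumset A) \<ge> 3"
proof -
  obtain a b c where abc: "a \<in> A" "b \<in> A" "c \<in> A" "a \<noteq> b" "a \<noteq> c" "b \<noteq> c"
    using obtain_three_distinct[OF assms] .
  then have "{a + b, a + c, c + b} \<subseteq> restricted_sumset A"
    by (auto intro: restricted_sumsetI)
  moreover have "a + b \<noteq> a + c" "a + b \<noteq> c + b" "a + c \<noteq> c + b"
    using abc by (metis add_left_cancel add_right_cancel add.commute)+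
  then have "card {a + b, a + c, c + b} = 3" by simp
  ultimately show ?thesis by (metis card_mono finite)
qed

section \<open>Restricted sumsets in \<open>\<int>\<^sub>3\<^sup>2\<close>\<close>

lemma UNIV_3: "(UNIV :: 3 set) = {0, 1, 2}"
  by (rule sym, rule card_subset_eq) auto

lemma triple_eq_zero: "(x :: 3 \<times> 3) + x + x = 0"
proof -
  have "a + a + a = 0" for a :: 3
    using UNIV_I[of a] unfolding UNIV_3 by auto
  then show ?thesis by (cases x) (simp add: zero_prod_def)
qed

lemma double_eq_neg: "(x :: 3 \<times> 3) + x = - x"
  using triple_eq_zero[of x] by (simp add: eq_neg_iff_add_eq_0)

lemma double_eq_zero_iff: "(x :: 3 \<times> 3) + x = 0 \<longleftrightarrow> x = 0"
  using double_eq_neg[of x] by auto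

lemma card_le_9: "card (A :: (3 \<times> 3) set) \<le> 9"
  using card_mono[of UNIV A] by simp

text \<open>\<open>x \<mapsto> t - x\<close> permutes the 8 points other than \<open>-t\<close> without fixed points (\<open>x + x = t\<close> only for
  \<open>x = -t\<close>), so a set of 5 of them meets its own image.\<close>

lemma mem_restricted_sumset_if_card_Diff_ge_5:
  fixes A :: "(3 \<times> 3) set"
  assumes "card (A - {-t}) \<ge> 5"
  shows "t \<in> restricted_sumset A"
proof -
  let ?A = "A - {-t}" and ?M = "UNIV - {-t} :: (3 \<times> 3) set"
  let ?B = "(\<lambda>x. t - x) ` ?A"
  have halves: "x + x = t \<longleftrightarrow> x = -t" for x :: "3 \<times> 3"
    by (metis double_eq_neg minus_minus)
  have "inj_on (\<lambda>x. t - x) ?A" by (rule inj_onI) simp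
  then have card_B: "card ?B = card ?A" by (rule card_image)
  have "?B \<subseteq> ?M"
  proof
    fix y assume "y \<in> ?B"
    then obtain x where x: "x \<in> ?A" "y = t - x" by blast
    have "x \<noteq> t + t" using x(1) double_eq_neg[of t] by simp
    then show "y \<in> ?M" using x(2) by (auto simp: algebra_simps)
  qed
  then have "card (?A \<union> ?B) \<le> card ?M"
    by (intro card_mono) auto
  also have "card ?M = 8" by (simp add: card_Diff_singleton)
  finally have "?A \<inter> ?B \<noteq> {}"
    using assms card_B by (auto simp: card_Un_disjoint)
  then obtain x y where xy: "x \<in> ?A" "y \<in> ?A" "x + y = t" by (force simp: eq_diff_eq)
  moreover from xy have "x \<noteq> y" using halves by (metis DiffE singletonI)
  ultimately show ?thesis by (metis Diff_iff restricted_sumsetI)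
qed

lemma mem_restricted_sumset_if_card_ge_6:
  fixes A :: "(3 \<times> 3) set"
  assumes "card A \<ge> 6"
  shows "t \<in> restricted_sumset A"
proof -
  have "card A - 1 \<le> card (A - {-t})" by (simp add: card_Diff_singleton_if)
  then show ?thesis using assms by (intro mem_restricted_sumset_if_card_Diff_ge_5) linarith
qed

lemma exists_subset_card_4_sum_eq:
  fixes A :: "(3 \<times> 3) set"
  assumes "card A \<ge> 6"
  shows "\<exists>B\<subseteq>A. card B = 4 \<and> \<Sum>B = t"
proof -
  obtain A6 where A6: "A6 \<subseteq> A" "card A6 = 6"
    using obtain_subset_with_card_n[OF assms] by blast
  have "\<Sum>A6 - t \<in> restricted_sumset A6" by (rule mem_restricted_sumset_if_card_ge_6) (simp add: A6)
  then obtain P where P: "P \<subseteq> A6" "card P = 2" "\<Sum>P = \<Sum>A6 - t"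
    by (rule restricted_sumset_obtain_pair)
  have "card (A6 - P) = 4" and "\<Sum>(A6 - P) = t"
    using A6 P by (simp_all add: card_Diff_subset sum_diff)
  then show ?thesis using A6(1) by blast
qed

text \<open>In characteristic \<open>\<noteq> 2\<close> at most one of the three ways to split four distinct points
  into two pairs can give equal pair sums.\<close>

lemma eq_middle_if_pair_sums_eq:
  fixes x y z w :: "3 \<times> 3"
  assumes "x + y = z + w" "x + z = y + w"
  shows "y = z"
proof -
  have "(y - z) + (y - z) = (x + y) - (x + z) - ((z + w) - (y + w))"
    by (simp add: algebra_simps)
  also have "\<dots> = 0" using assms by simp
  finally have "y - z = 0" by (simp only: double_eq_zero_iff)
  then show ?thesis by simp
qed

lemma card_restricted_sumset_ge_5:
  fixes A :: "(3 \<times> 3) set"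
  assumes "card A \<ge> 4"
  shows "card (restricted_sumset A) \<ge> 5"
proof -
  obtain a b c d where abcd: "a \<in> A" "b \<in> A" "c \<in> A" "d \<in> A"
    "a \<noteq> b" "a \<noteq> c" "a \<noteq> d" "b \<noteq> c" "b \<noteq> d" "c \<noteq> d"
    using obtain_four_distinct[OF assms] .
  have adjacent: "a+b \<noteq> a+c" "a+b \<noteq> a+d" "a+b \<noteq> b+c" "a+b \<noteq> b+d"
     "a+c \<noteq> a+d" "a+c \<noteq> b+c" "a+c \<noteq> c+d" "a+d \<noteq> b+d" "a+d \<noteq> c+d"
     "b+c \<noteq> b+d" "b+c \<noteq> c+d" "b+d \<noteq> c+d"
    using abcd by (simp_all add: add.commute[of a b] add.commute[of a c] add.commute[of b c]
        add.commute[of a d] add.commute[of b d] add.commute[of c d])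
  have opposite: "\<not> (a+b = c+d \<and> a+c = b+d)" "\<not> (a+b = c+d \<and> a+d = b+c)"
    "\<not> (a+c = b+d \<and> a+d = b+c)"
    using eq_middle_if_pair_sums_eq[of a b c d] eq_middle_if_pair_sums_eq[of a b d c]
      eq_middle_if_pair_sums_eq[of a c d b] abcd by (auto simp: add.commute)
  have five: "card F = 5 \<Longrightarrow> F \<subseteq> restricted_sumset A \<Longrightarrow> ?thesis" for F
    by (metis card_mono finite)
  consider "a+b \<noteq> c+d" "a+c \<noteq> b+d" | "a+b = c+d" | "a+c = b+d" "a+b \<noteq> c+d"
    by blast
  then show ?thesis
  proof cases
    case 1
    then have "card {a+b, c+d, a+c, b+d, a+d} = 5" using adjacent by (simp add: eq_commute)
    then show ?thesis by (rule five) (use abcd in \<open>auto intro: restricted_sumsetI\<close>)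
  next
    case 2
    then have "card {a+b, a+c, b+d, a+d, b+c} = 5"
      using opposite(1,2) adjacent by (simp add: eq_commute)
    then show ?thesis by (rule five) (use abcd in \<open>auto intro: restricted_sumsetI\<close>)
  next
    case 3
    then have "card {a+b, c+d, a+c, a+d, b+c} = 5"
      using opposite(3) adjacent by (simp add: eq_commute)
    then show ?thesis by (rule five) (use abcd in \<open>auto intro: restricted_sumsetI\<close>)
  qed
qed

text \<open>Five points of the affine plane over \<open>\<int>\<^sub>3\<close> always contain a line, i.e.\ a zero-sum
  triple: otherwise the at least five sums of pairs and the five negated points would be disjoint.\<close>

lemma exists_zero_sum_triple:
  fixes A :: "(3 \<times> 3) set"
  assumes "card A \<ge> 5"
  shows "\<exists>a\<in>A. \<exists>b\<in>A. \<exists>c\<in>A. a \<noteq> b \<and> a \<noteq> c \<and> b \<noteq> c \<and> a + b + c = 0"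
proof -
  obtain A5 where A5: "A5 \<subseteq> A" "card A5 = 5"
    using obtain_subset_with_card_n[OF assms] by blast
  have "card (uminus ` A5) = 5" using A5(2) by (simp add: card_image)
  moreover have "card (restricted_sumset A5) \<ge> 5"
    using card_restricted_sumset_ge_5[of A5] A5(2) by simp
  ultimately have "restricted_sumset A5 \<inter> uminus ` A5 \<noteq> {}"
    using card_le_9[of "restricted_sumset A5 \<union> uminus ` A5"] by (auto simp: card_Un_disjoint)
  then obtain x y z where xyz: "x \<in> A5" "y \<in> A5" "z \<in> A5" "x \<noteq> y" "x + y = - z"
    unfolding restricted_sumset_def by blast
  have "x + y \<noteq> x + x" "x + y \<noteq> y + y" using xyz(4) by simp_all
  then have "x \<noteq> z" "y \<noteq> z"
    using xyz(5) double_eq_neg[of x] double_eq_neg[of y] by auto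
  moreover have "x + y + z = 0" using xyz(5) by (simp add: eq_neg_iff_add_eq_0)
  moreover have "x \<in> A" "y \<in> A" "z \<in> A" using xyz(1-3) A5(1) by auto
  ultimately show ?thesis using xyz(4) by blast
qed

text \<open>A sum \<open>s\<close> missed by \<open>restricted_sumset A\<close> forces \<open>-s \<in> A\<close>, but \<open>-s\<close> is not a point of a zero-sum triple
  \<open>a, b, c\<close> in \<open>A\<close> (else \<open>s\<close> is the sum of the other two); so at most two sums are missed.\<close>

lemma card_restricted_sumset_ge_7:
  fixes A :: "(3 \<times> 3) set"
  assumes "card A \<ge> 5"
  shows "card (restricted_sumset A) \<ge> 7"
proof -
  obtain A5 where A5: "A5 \<subseteq> A" "card A5 = 5"
    using obtain_subset_with_card_n[OF assms] by blast
  have "\<exists>a\<in>A5. \<exists>b\<in>A5. \<exists>c\<in>A5. a \<noteq> b \<and> a \<noteq> c \<and> b \<noteq> c \<and> a + b + c = 0"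
    using A5(2) by (intro exists_zero_sum_triple) simp
  then obtain a b c where abc: "a \<in> A5" "b \<in> A5" "c \<in> A5" "a \<noteq> b" "a \<noteq> c" "b \<noteq> c"
    "a + b + c = 0"
    by blast
  have missed: "UNIV - restricted_sumset A5 \<subseteq> uminus ` (A5 - {a, b, c})"
  proof
    fix s assume s: "s \<in> UNIV - restricted_sumset A5"
    have "\<not> card (A5 - {-s}) \<ge> 5"
      using s mem_restricted_sumset_if_card_Diff_ge_5 by blast
    then have "-s \<in> A5" using A5(2) by (cases "-s \<in> A5") simp_all
    moreover have "-s \<notin> {a, b, c}"
    proof
      assume "-s \<in> {a, b, c}"
      then have "s \<in> {b + c, a + c, a + b}"
        using abc(7) by (auto simp: minus_equation_iff add_eq_0_iff2 ac_simps)
      then show False using s abc(1-6) by (auto intro: restricted_sumsetI)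
    qed
    ultimately have "-s \<in> A5 - {a, b, c}" by blast
    then show "s \<in> uminus ` (A5 - {a, b, c})" by (rule rev_image_eqI) simp
  qed
  have "card (A5 - {a, b, c}) = 2" using A5 abc by (simp add: card_Diff_subset)
  then have "card (UNIV - restricted_sumset A5) \<le> 2"
    using card_mono[OF _ missed] card_image_le[of "A5 - {a, b, c}" uminus] by simp
  then have "card (restricted_sumset A5) \<ge> 7" by (simp add: card_Diff_subset)
  also have "\<dots> \<le> card (restricted_sumset A)"
    by (intro card_mono restricted_sumset_mono A5(1)) simp
  finally show ?thesis .
qed

section \<open>Lines in \<open>\<int>\<^sub>3\<^sup>2\<close>\<close>

definition multiples :: "'a::ab_group_add \<Rightarrow> 'a set" where
  "multiples d = {0, d, -d}"

definition line :: "'a::ab_group_add \<Rightarrow> 'a \<Rightarrow> 'a set" where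
  "line d c = {c, c + d, c - d}"

lemma multiples_add:
  fixes d :: "3 \<times> 3"
  shows "m \<in> multiples d \<Longrightarrow> m' \<in> multiples d \<Longrightarrow> m + m' \<in> multiples d"
  using double_eq_neg[of d] double_eq_neg[of "-d"] unfolding multiples_def by auto

lemma multiples_uminus: "m \<in> multiples d \<Longrightarrow> - m \<in> multiples d"
  unfolding multiples_def by auto

lemma multiples_diff:
  fixes d :: "3 \<times> 3"
  shows "m \<in> multiples d \<Longrightarrow> m' \<in> multiples d \<Longrightarrow> m - m' \<in> multiples d"
  using multiples_add[of m d "- m'"] multiples_uminus[of m' d] by simp

lemma mem_line_iff: "x \<in> line d c \<longleftrightarrow> x - c \<in> multiples d"
  unfolding line_def multiples_def by (auto simp: algebra_simps)

lemma line_self: "c \<in> line d c"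
  unfolding line_def by simp

lemma line_uminus: "line (- d) c = line d c"
  unfolding line_def by auto

lemma diff_mem_multiples_if_mem_line:
  fixes d :: "3 \<times> 3"
  assumes "x \<in> line d c" "y \<in> line d c"
  shows "y - x \<in> multiples d"
  using multiples_diff[of "y - c" d "x - c"] assms by (simp add: mem_line_iff)

lemma diff_mem_multiples_if_lines_meet:
  fixes d :: "3 \<times> 3"
  assumes "z \<in> line d x" "z \<in> line d y"
  shows "y - x \<in> multiples d"
  using multiples_diff[of "z - x" d "z - y"] assms by (simp add: mem_line_iff)

lemma add_ne_diff:
  fixes d :: "3 \<times> 3"
  assumes "d \<noteq> 0"
  shows "c + d \<noteq> c - d"
  using assms double_eq_zero_iff[of d] by (simp add: eq_neg_iff_add_eq_0)

lemma card_line: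
  fixes d :: "3 \<times> 3"
  assumes "d \<noteq> 0"
  shows "card (line d c) = 3"
  using add_ne_diff[OF assms, of c] assms unfolding line_def by simp

lemma sum_line:
  fixes d :: "3 \<times> 3"
  assumes "d \<noteq> 0"
  shows "\<Sum>(line d c) = 0"
proof -
  have "\<Sum>(line d c) = c + c + c"
    using add_ne_diff[OF assms, of c] assms unfolding line_def by (simp add: algebra_simps)
  then show ?thesis by (simp add: triple_eq_zero)
qed

lemma exists_pair_in_line_sum_eq:
  fixes d :: "3 \<times> 3"
  assumes "d \<noteq> 0" and "m \<in> multiples d"
  shows "\<exists>x y. x \<in> line d c \<and> y \<in> line d c \<and> x \<noteq> y \<and> x + y = - c + m"
proof -
  have cc: "c + c = - c" by (rule double_eq_neg)
  consider "m = 0" | "m = d" | "m = - d" using assms(2) unfolding multiples_def by blast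
  then show ?thesis
  proof cases
    case 1
    have "(c + d) + (c - d) = - c + m" using 1 cc by (simp add: algebra_simps)
    then show ?thesis using add_ne_diff[OF assms(1)] unfolding line_def by blast
  next
    case 2
    have "c + (c + d) = - c + m" using 2 cc by (simp add: algebra_simps)
    moreover have "c \<noteq> c + d" using assms(1) by simp
    ultimately show ?thesis unfolding line_def by blast
  next
    case 3
    have "c + (c - d) = - c + m" using 3 cc by (simp add: algebra_simps)
    moreover have "c \<noteq> c - d" using assms(1) by simp
    ultimately show ?thesis unfolding line_def by blast
  qed
qed

lemma eq_insert3_if_card_3:
  assumes "card X = 3" "p \<in> X" "q \<in> X" "r \<in> X" "p \<noteq> q" "p \<noteq> r" "q \<noteq> r"
  shows "X = {p, q, r}"
proof -
  have "{p, q, r} \<subseteq> X" "card {p, q, r} = 3" using assms by simp_all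
  then show ?thesis using assms(1) by (metis card_subset_eq card.infinite zero_neq_numeral)
qed

lemma eq_line_if_translates_mem:
  fixes X :: "(3 \<times> 3) set"
  assumes X: "card X = 3" and t: "t \<noteq> 0"
    and uv: "u \<in> X" "v \<in> X" "u \<noteq> v" "u + t \<in> X" "v + t \<in> X"
  shows "\<exists>c. X = line t c"
proof -
  have ut: "u + t + t = u - t" using double_eq_neg[of t] by (simp add: algebra_simps)
  have distinct: "u \<noteq> u + t" "u \<noteq> u - t" "u + t \<noteq> u - t"
    using t add_ne_diff[OF t] by simp_all
  have "u - t \<in> X"
  proof (cases "v = u + t")
    case True
    then show ?thesis using uv ut by simp
  next
    case False
    then have "X = {u, u + t, v}" using eq_insert3_if_card_3[OF X] uv distinct by simp
    moreover have "v + t \<noteq> v" "v + t \<noteq> u + t" using t uv by simp_all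
    ultimately have "v + t = u" using uv by auto
    then show ?thesis using uv by (metis add_diff_cancel)
  qed
  then have "X = line t u"
    unfolding line_def using eq_insert3_if_card_3[OF X] uv distinct by simp
  then show ?thesis ..
qed

text \<open>The translates \<open>Y + z\<^sub>1\<close> and \<open>Y + z\<^sub>2\<close> lie in a sumset of size 4, so they share two
  points; thus translation by \<open>z\<^sub>2 - z\<^sub>1\<close> maps two points of \<open>Y\<close> into \<open>Y\<close>, which forces \<open>Y\<close> to be
  a line in that direction.\<close>

lemma eq_line_if_card_sumset_le_4:
  fixes Y Z :: "(3 \<times> 3) set"
  assumes Y: "card Y = 3" and small: "card (Y + Z) \<le> 4"
    and z: "z1 \<in> Z" "z2 \<in> Z" "z1 \<noteq> z2"
  shows "\<exists>c. Y = line (z2 - z1) c"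
proof -
  let ?P = "(\<lambda>y. y + z1) ` Y" and ?Q = "(\<lambda>y. y + z2) ` Y"
  have "card ?P = 3" "card ?Q = 3" using Y by (simp_all add: card_image)
  moreover have "?P \<union> ?Q \<subseteq> Y + Z" using z by auto
  then have "card (?P \<union> ?Q) \<le> 4" using small card_mono[of "Y + Z" "?P \<union> ?Q"] by simp
  ultimately have "card (?P \<inter> ?Q) \<ge> 2" using card_Un_Int[of ?P ?Q] by simp
  then obtain W where W: "W \<subseteq> ?P \<inter> ?Q" "card W = 2"
    by (rule obtain_subset_with_card_n)
  then obtain w1 w2 where w: "W = {w1, w2}" "w1 \<noteq> w2" unfolding card_2_iff by blast
  then have "w1 \<in> ?P \<inter> ?Q" "w2 \<in> ?P \<inter> ?Q" using W by auto
  then obtain p1 q1 p2 q2 where pq: "p1 \<in> Y" "q1 \<in> Y" "p2 \<in> Y" "q2 \<in> Y"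
    "w1 = p1 + z1" "w1 = q1 + z2" "w2 = p2 + z1" "w2 = q2 + z2" by blast
  have "q1 + (z2 - z1) = p1" "q2 + (z2 - z1) = p2"
    using pq(5-8) by (simp_all add: algebra_simps)
  moreover have "q1 \<noteq> q2" using pq w by auto
  moreover have "z2 - z1 \<noteq> 0" using z by simp
  ultimately show ?thesis using eq_line_if_translates_mem[OF Y] pq(1-4) by simp
qed

lemma parallel_lines_if_card_sumset_le_4:
  fixes Y Z :: "(3 \<times> 3) set"
  assumes Y: "card Y = 3" and Z: "card Z = 3" and small: "card (Y + Z) \<le> 4"
  shows "\<exists>d c1 c2. d \<noteq> 0 \<and> Y = line d c1 \<and> Z = line d c2"
proof -
  have "card Z \<ge> 3" using Z by simp
  then obtain z1 z2 z3 where z: "z1 \<in> Z" "z2 \<in> Z" "z3 \<in> Z" "z1 \<noteq> z2" "z1 \<noteq> z3" "z2 \<noteq> z3"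
    by (rule obtain_three_distinct)
  obtain c where c: "Y = line (z2 - z1) c"
    using eq_line_if_card_sumset_le_4[OF Y small z(1,2,4)] by blast
  have t: "z2 - z1 \<noteq> 0" using z by simp
  then have "c \<in> Y" "c + (z2 - z1) \<in> Y" "c \<noteq> c + (z2 - z1)" using c unfolding line_def by simp_all
  moreover have "card (Z + Y) \<le> 4" using small by (simp add: add.commute)
  ultimately obtain c' where "Z = line (z2 - z1) c'"
    using eq_line_if_card_sumset_le_4[OF Z] by fastforce
  then show ?thesis using c t by blast
qed

section \<open>Zero-sum selections from four subsets of \<open>\<int>\<^sub>3\<^sup>2\<close>\<close>

text \<open>The sets \<open>A\<^sub>i\<close> stand for the images in \<open>\<int>\<^sub>3\<^sup>2\<close> of the four classes of a subset of \<open>\<int>\<^sub>6\<^sup>2\<close> over the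
  2-torsion \<open>{0, 3}\<^sup>2\<close>. Subsets \<open>B\<^sub>i\<close> of equal parity lift to a set whose 2-torsion part sums to zero,
  because the four 2-torsion elements sum to zero and each has order at most 2.\<close>

definition zero_sum_selection ::
    "(3 \<times> 3) set \<Rightarrow> (3 \<times> 3) set \<Rightarrow> (3 \<times> 3) set \<Rightarrow> (3 \<times> 3) set \<Rightarrow> bool" where
  "zero_sum_selection A0 A1 A2 A3 \<longleftrightarrow> (\<exists>B0 B1 B2 B3.
     B0 \<subseteq> A0 \<and> B1 \<subseteq> A1 \<and> B2 \<subseteq> A2 \<and> B3 \<subseteq> A3 \<and>
     card B0 + card B1 + card B2 + card B3 = 6 \<and>
     ((even (card B0) \<and> even (card B1) \<and> even (card B2) \<and> even (card B3)) \<or>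
      (odd (card B0) \<and> odd (card B1) \<and> odd (card B2) \<and> odd (card B3))) \<and>
     \<Sum>B0 + \<Sum>B1 + \<Sum>B2 + \<Sum>B3 = 0)"

lemma zero_sum_selectionI:
  assumes "B0 \<subseteq> A0" "B1 \<subseteq> A1" "B2 \<subseteq> A2" "B3 \<subseteq> A3"
    "card B0 + card B1 + card B2 + card B3 = 6"
    "(even (card B0) \<and> even (card B1) \<and> even (card B2) \<and> even (card B3)) \<or>
      (odd (card B0) \<and> odd (card B1) \<and> odd (card B2) \<and> odd (card B3))"
    "\<Sum>B0 + \<Sum>B1 + \<Sum>B2 + \<Sum>B3 = 0"
  shows "zero_sum_selection A0 A1 A2 A3"
  unfolding zero_sum_selection_def using assms by blast

lemma zero_sum_selection_swap01:
  assumes "zero_sum_selection A1 A0 A2 A3"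
  shows "zero_sum_selection A0 A1 A2 A3"
proof -
  obtain B0 B1 B2 B3 where "B0 \<subseteq> A1" "B1 \<subseteq> A0" "B2 \<subseteq> A2" "B3 \<subseteq> A3"
    "card B0 + card B1 + card B2 + card B3 = 6"
    "(even (card B0) \<and> even (card B1) \<and> even (card B2) \<and> even (card B3)) \<or>
      (odd (card B0) \<and> odd (card B1) \<and> odd (card B2) \<and> odd (card B3))"
    "\<Sum>B0 + \<Sum>B1 + \<Sum>B2 + \<Sum>B3 = 0"
    using assms unfolding zero_sum_selection_def by blast
  then show ?thesis by (intro zero_sum_selectionI[of B1 _ B0 _ B2 _ B3]) (auto simp: ac_simps)
qed

lemma zero_sum_selection_swap12:
  assumes "zero_sum_selection A0 A2 A1 A3"
  shows "zero_sum_selection A0 A1 A2 A3"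
proof -
  obtain B0 B1 B2 B3 where "B0 \<subseteq> A0" "B1 \<subseteq> A2" "B2 \<subseteq> A1" "B3 \<subseteq> A3"
    "card B0 + card B1 + card B2 + card B3 = 6"
    "(even (card B0) \<and> even (card B1) \<and> even (card B2) \<and> even (card B3)) \<or>
      (odd (card B0) \<and> odd (card B1) \<and> odd (card B2) \<and> odd (card B3))"
    "\<Sum>B0 + \<Sum>B1 + \<Sum>B2 + \<Sum>B3 = 0"
    using assms unfolding zero_sum_selection_def by blast
  then show ?thesis by (intro zero_sum_selectionI[of B0 _ B2 _ B1 _ B3]) (auto simp: ac_simps)
qed

lemma zero_sum_selection_swap23:
  assumes "zero_sum_selection A0 A1 A3 A2"
  shows "zero_sum_selection A0 A1 A2 A3"
proof -
  obtain B0 B1 B2 B3 where "B0 \<subseteq> A0" "B1 \<subseteq> A1" "B2 \<subseteq> A3" "B3 \<subseteq> A2"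
    "card B0 + card B1 + card B2 + card B3 = 6"
    "(even (card B0) \<and> even (card B1) \<and> even (card B2) \<and> even (card B3)) \<or>
      (odd (card B0) \<and> odd (card B1) \<and> odd (card B2) \<and> odd (card B3))"
    "\<Sum>B0 + \<Sum>B1 + \<Sum>B2 + \<Sum>B3 = 0"
    using assms unfolding zero_sum_selection_def by blast
  then show ?thesis by (intro zero_sum_selectionI[of B0 _ B1 _ B3 _ B2]) (auto simp: ac_simps)
qed

lemma exists_zero_sum_pairs_if_card_restricted_sumsets:
  fixes X Y Z :: "(3 \<times> 3) set"
  assumes "card (restricted_sumset X) + card (restricted_sumset Y) \<ge> 10" "card Z \<ge> 2"
  shows "\<exists>P Q R. P \<subseteq> X \<and> card P = 2 \<and> Q \<subseteq> Y \<and> card Q = 2 \<and> R \<subseteq> Z \<and> card R = 2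
     \<and> \<Sum>P + \<Sum>Q + \<Sum>R = 0"
proof -
  obtain R where R: "R \<subseteq> Z" "card R = 2"
    using obtain_subset_with_card_n[OF assms(2)] by blast
  have large: "card (restricted_sumset X) + card (restricted_sumset Y) > CARD(3 \<times> 3)"
    using assms(1) by simp
  obtain p q where pq: "p \<in> restricted_sumset X" "q \<in> restricted_sumset Y" "p + q = - \<Sum>R"
    using exists_add_eq_if_card_gt[OF large] by blast
  obtain P where P: "P \<subseteq> X" "card P = 2" "\<Sum>P = p"
    using pq(1) by (rule restricted_sumset_obtain_pair)
  obtain Q where Q: "Q \<subseteq> Y" "card Q = 2" "\<Sum>Q = q"
    using pq(2) by (rule restricted_sumset_obtain_pair)
  have "\<Sum>P + \<Sum>Q + \<Sum>R = 0" using P Q pq by simp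
  then show ?thesis using P Q R by blast
qed

text \<open>Take the pairs \<open>Y - {y}\<close> and \<open>Z - {z}\<close>: it remains to find a pair sum \<open>p\<close> of \<open>X\<close> with
  \<open>p - (y + z) = -(\<Sum>Y + \<Sum>Z)\<close>, which exists by pigeonhole since \<open>5 + 5 > 9\<close>.\<close>

lemma exists_zero_sum_pairs_if_card_sumset_ge_5:
  fixes X Y Z :: "(3 \<times> 3) set"
  assumes X: "card X \<ge> 4" and Y: "card Y = 3" and Z: "card Z = 3"
    and large: "card (Y + Z) \<ge> 5"
  shows "\<exists>P Q R. P \<subseteq> X \<and> card P = 2 \<and> Q \<subseteq> Y \<and> card Q = 2 \<and> R \<subseteq> Z \<and> card R = 2
     \<and> \<Sum>P + \<Sum>Q + \<Sum>R = 0"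
proof -
  have "card (uminus ` (Y + Z)) = card (Y + Z)" by (simp add: card_image)
  then have sizes: "card (restricted_sumset X) + card (uminus ` (Y + Z)) > CARD(3 \<times> 3)"
    using card_restricted_sumset_ge_5[OF X] large by simp
  obtain p w where pw: "p \<in> restricted_sumset X" "w \<in> uminus ` (Y + Z)"
    "p + w = - (\<Sum>Y + \<Sum>Z)"
    using exists_add_eq_if_card_gt[OF sizes] by blast
  then obtain y z where yz: "y \<in> Y" "z \<in> Z" "w = - (y + z)" by (auto elim: set_plus_elim)
  obtain P where P: "P \<subseteq> X" "card P = 2" "\<Sum>P = p"
    using pw(1) by (rule restricted_sumset_obtain_pair)
  have "card (Y - {y}) = 2" "card (Z - {z}) = 2" using Y Z yz by simp_all
  moreover have "\<Sum>P + \<Sum>(Y - {y}) + \<Sum>(Z - {z}) = 0"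
  proof -
    have "\<Sum>(Y - {y}) = \<Sum>Y - y" "\<Sum>(Z - {z}) = \<Sum>Z - z"
      using yz by (simp_all add: sum_diff1)
    then have "\<Sum>P + \<Sum>(Y - {y}) + \<Sum>(Z - {z}) = p + (\<Sum>Y - y) + (\<Sum>Z - z)"
      using P(3) by simp
    also have "\<dots> = (p + - (y + z)) + (\<Sum>Y + \<Sum>Z)" by (simp add: algebra_simps)
    also have "\<dots> = 0" using pw(3) yz(3) by simp
    finally show ?thesis .
  qed
  ultimately show ?thesis using P by blast
qed

lemma exists_mem_line_zero_sum:
  fixes d :: "3 \<times> 3"
  assumes "a \<in> line d (- (u + v))"
  shows "\<exists>x\<in>line d u. a + x + v = 0"
proof -
  have "a + u + v \<in> multiples d"
    using assms by (simp add: mem_line_iff algebra_simps)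
  then have "u - (a + u + v) \<in> line d u"
    unfolding mem_line_iff using multiples_uminus by (fastforce simp: algebra_simps)
  moreover have "a + (u - (a + u + v)) + v = 0" by (simp add: algebra_simps)
  ultimately show ?thesis by blast
qed

lemma card_le_3_if_disjoint_lines:
  fixes d :: "3 \<times> 3"
  assumes "d \<noteq> 0" "line d x \<inter> line d y = {}"
    "A \<inter> line d x = {}" "A \<inter> line d y = {}"
  shows "card A \<le> 3"
proof -
  have "card (line d x \<union> line d y) = 6"
    using assms(1,2) by (simp add: card_Un_disjoint card_line)
  moreover have "A \<inter> (line d x \<union> line d y) = {}" using assms(3,4) by blast
  ultimately have "card (A \<union> (line d x \<union> line d y)) = card A + 6"
    by (simp add: card_Un_disjoint)
  then show ?thesis using card_le_9[of "A \<union> (line d x \<union> line d y)"] by simp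
qed

text \<open>If \<open>A\<^sub>0\<close> missed all three lines, then by \<open>card_le_3_if_disjoint_lines\<close> the first line would
  meet both others, which puts \<open>u\<^sub>1 + u\<^sub>2 + u\<^sub>3\<close> into \<open>multiples d\<close>.\<close>

lemma exists_mem_lines_through_neg_pair_sums:
  fixes d :: "3 \<times> 3"
  assumes d: "d \<noteq> 0" and A0: "card A0 = 4" and not_mem: "u1 + u2 + u3 \<notin> multiples d"
  shows "\<exists>a\<in>A0. a \<in> line d (- (u2 + u3)) \<or> a \<in> line d (- (u1 + u3)) \<or> a \<in> line d (- (u1 + u2))"
    (is "\<exists>a\<in>A0. a \<in> ?T1 \<or> a \<in> ?T2 \<or> a \<in> ?T3")
proof (rule ccontr)
  assume "\<not> ?thesis"
  then have avoid: "A0 \<inter> ?T1 = {}" "A0 \<inter> ?T2 = {}" "A0 \<inter> ?T3 = {}" by blast+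
  have "?T1 \<inter> ?T2 \<noteq> {}" "?T1 \<inter> ?T3 \<noteq> {}"
    using card_le_3_if_disjoint_lines[OF d _ avoid(1,2)]
      card_le_3_if_disjoint_lines[OF d _ avoid(1,3)] A0 by linarith+
  then have "- (u1 + u3) - - (u2 + u3) \<in> multiples d" "- (u1 + u2) - - (u2 + u3) \<in> multiples d"
    using diff_mem_multiples_if_lines_meet by blast+
  then have "(- (u1 + u3) - - (u2 + u3)) + (- (u1 + u2) - - (u2 + u3)) \<in> multiples d"
    by (rule multiples_add)
  also have "(- (u1 + u3) - - (u2 + u3)) + (- (u1 + u2) - - (u2 + u3)) = u2 + u3 + (- u1 - u1)"
    by (simp add: algebra_simps)
  also have "\<dots> = u1 + u2 + u3"
    using double_eq_neg[of "- u1"] by (simp add: algebra_simps)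
  finally show False using not_mem by simp
qed

text \<open>If \<open>u\<^sub>1 + u\<^sub>2 + u\<^sub>3 \<in> multiples d\<close>, a pair from each line works. Otherwise a point of \<open>A\<^sub>0\<close> on one
  of the lines through \<open>-(u\<^sub>j + u\<^sub>k)\<close>, one full line and a point on each of the other two lines give a
  selection of sizes 1, 3, 1, 1.\<close>

lemma zero_sum_selection_parallel_lines:
  fixes d :: "3 \<times> 3"
  assumes d: "d \<noteq> 0" and A0: "card A0 = 4"
    and L1: "A1 = line d u1" and L2: "A2 = line d u2" and L3: "A3 = line d u3"
  shows "zero_sum_selection A0 A1 A2 A3"
proof (cases "u1 + u2 + u3 \<in> multiples d")
  case True
  have "0 \<in> multiples d" unfolding multiples_def by simp
  then obtain x1 y1 x2 y2 where
    p1: "x1 \<in> A1" "y1 \<in> A1" "x1 \<noteq> y1" "x1 + y1 = - u1 + 0" and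
    p2: "x2 \<in> A2" "y2 \<in> A2" "x2 \<noteq> y2" "x2 + y2 = - u2 + 0"
    using exists_pair_in_line_sum_eq[OF d] L1 L2 by meson
  obtain x3 y3 where p3: "x3 \<in> A3" "y3 \<in> A3" "x3 \<noteq> y3" "x3 + y3 = - u3 + (u1 + u2 + u3)"
    using exists_pair_in_line_sum_eq[OF d True] L3 by blast
  have "\<Sum>{} + \<Sum>{x1, y1} + \<Sum>{x2, y2} + \<Sum>{x3, y3} = 0"
    using p1 p2 p3 by (simp add: algebra_simps)
  then show ?thesis
    using p1 p2 p3 by (intro zero_sum_selectionI[of "{}" _ "{x1, y1}" _ "{x2, y2}" _ "{x3, y3}"]) simp_all
next
  case False
  let ?T1 = "line d (- (u2 + u3))" and ?T2 = "line d (- (u1 + u3))" and ?T3 = "line d (- (u1 + u2))"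
  have sums: "\<Sum>A1 = 0" "\<Sum>A2 = 0" "\<Sum>A3 = 0"
    using L1 L2 L3 sum_line[OF d] by simp_all
  have "\<exists>a\<in>A0. a \<in> ?T1 \<or> a \<in> ?T2 \<or> a \<in> ?T3"
    using exists_mem_lines_through_neg_pair_sums[OF d A0 False] .
  then obtain a where a: "a \<in> A0" "a \<in> ?T1 \<or> a \<in> ?T2 \<or> a \<in> ?T3" by blast
  have on_lines: "u2 \<in> A2" "u3 \<in> A3" using L2 L3 line_self by simp_all
  consider "a \<in> ?T1" | "a \<in> ?T2" | "a \<in> ?T3" using a by blast
  then show ?thesis
  proof cases
    case 1
    then obtain x where "x \<in> A2" "a + x + u3 = 0"
      using exists_mem_line_zero_sum L2 by blast
    then show ?thesis using a(1) on_lines sums card_line[OF d] L1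
      by (intro zero_sum_selectionI[of "{a}" _ A1 _ "{x}" _ "{u3}"]) simp_all
  next
    case 2
    then obtain x where "x \<in> A1" "a + x + u3 = 0"
      using exists_mem_line_zero_sum L1 by blast
    then show ?thesis using a(1) on_lines sums card_line[OF d] L2
      by (intro zero_sum_selectionI[of "{a}" _ "{x}" _ A2 _ "{u3}"]) (simp_all add: algebra_simps)
  next
    case 3
    then obtain x where "x \<in> A1" "a + x + u2 = 0"
      using exists_mem_line_zero_sum L1 by blast
    then show ?thesis using a(1) on_lines sums card_line[OF d] L3
      by (intro zero_sum_selectionI[of "{a}" _ "{x}" _ "{u2}" _ A3]) (simp_all add: algebra_simps)
  qed
qed

lemma zero_sum_selection_card_4_3_3_3:
  assumes c0: "card A0 = 4" and c1: "card A1 = 3" and c2: "card A2 = 3" and c3: "card A3 = 3"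
  shows "zero_sum_selection A0 A1 A2 A3"
proof -
  have c0': "card A0 \<ge> 4" using c0 by simp
  consider "card (A1 + A2) \<ge> 5" | "card (A1 + A3) \<ge> 5" | "card (A2 + A3) \<ge> 5"
    | "card (A1 + A2) \<le> 4" "card (A1 + A3) \<le> 4" by linarith
  then show ?thesis
  proof cases
    case 1
    then obtain P Q R where "P \<subseteq> A0" "card P = 2" "Q \<subseteq> A1" "card Q = 2" "R \<subseteq> A2" "card R = 2"
      "\<Sum>P + \<Sum>Q + \<Sum>R = 0"
      using exists_zero_sum_pairs_if_card_sumset_ge_5[OF c0' c1 c2] by blast
    then show ?thesis by (intro zero_sum_selectionI[of P _ Q _ R _ "{}"]) simp_all
  next
    case 2
    then obtain P Q R where "P \<subseteq> A0" "card P = 2" "Q \<subseteq> A1" "card Q = 2" "R \<subseteq> A3" "card R = 2"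
      "\<Sum>P + \<Sum>Q + \<Sum>R = 0"
      using exists_zero_sum_pairs_if_card_sumset_ge_5[OF c0' c1 c3] by blast
    then show ?thesis by (intro zero_sum_selectionI[of P _ Q _ "{}" _ R]) simp_all
  next
    case 3
    then obtain P Q R where "P \<subseteq> A0" "card P = 2" "Q \<subseteq> A2" "card Q = 2" "R \<subseteq> A3" "card R = 2"
      "\<Sum>P + \<Sum>Q + \<Sum>R = 0"
      using exists_zero_sum_pairs_if_card_sumset_ge_5[OF c0' c2 c3] by blast
    then show ?thesis by (intro zero_sum_selectionI[of P _ "{}" _ Q _ R]) simp_all
  next
    case 4
    obtain d u1 u2 where d: "d \<noteq> 0" and L1: "A1 = line d u1" and L2: "A2 = line d u2"
      using parallel_lines_if_card_sumset_le_4[OF c1 c2 4(1)] by blast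
    obtain d' u1' u3 where d': "d' \<noteq> 0" and L1': "A1 = line d' u1'" and L3: "A3 = line d' u3"
      using parallel_lines_if_card_sumset_le_4[OF c1 c3 4(2)] by blast
    have "u1' \<in> line d u1" "u1' + d' \<in> line d u1" using L1 L1' unfolding line_def by auto
    then have "(u1' + d') - u1' \<in> multiples d" by (rule diff_mem_multiples_if_mem_line)
    then have "d' = d \<or> d' = - d" using d' unfolding multiples_def by simp
    then have "A3 = line d u3" using L3 line_uminus[of d u3] by auto
    then show ?thesis using zero_sum_selection_parallel_lines[OF d c0 L1 L2] by blast
  qed
qed

lemma zero_sum_selection_if_sorted:
  assumes sorted: "card A1 \<le> card A0" "card A2 \<le> card A1" "card A3 \<le> card A2"
    and total: "card A0 + card A1 + card A2 + card A3 = 13"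
  shows "zero_sum_selection A0 A1 A2 A3"
proof -
  have le9: "card A0 \<le> 9" "card A1 \<le> 9" "card A2 \<le> 9" "card A3 \<le> 9"
    by (simp_all add: card_le_9)
  consider "card A0 \<ge> 6" | "card A0 = 4" "card A1 = 3" "card A2 = 3" "card A3 = 3"
    | "card A0 \<le> 5" "card A1 \<ge> 4 \<or> card A0 = 5"
    using sorted total by linarith
  then show ?thesis
  proof cases
    case 1
    have "card A1 \<ge> 2" using 1 sorted total le9 by linarith
    then obtain P where P: "P \<subseteq> A1" "card P = 2" by (rule obtain_subset_with_card_n)
    obtain B where "B \<subseteq> A0" "card B = 4" "\<Sum>B = - \<Sum>P"
      using exists_subset_card_4_sum_eq[OF 1] by blast
    then show ?thesis using P by (intro zero_sum_selectionI[of B _ P _ "{}" _ "{}"]) simp_all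
  next
    case 2
    then show ?thesis by (rule zero_sum_selection_card_4_3_3_3)
  next
    case 3
    have "card (restricted_sumset A0) + card (restricted_sumset A1) \<ge> 10"
    proof (cases "card A1 \<ge> 4")
      case True
      then have "card (restricted_sumset A0) \<ge> 5" "card (restricted_sumset A1) \<ge> 5"
        using sorted by (simp_all add: card_restricted_sumset_ge_5)
      then show ?thesis by linarith
    next
      case False
      then have "card A0 = 5" "card A1 \<ge> 3" using 3 sorted total by linarith+
      then have "card (restricted_sumset A0) \<ge> 7" "card (restricted_sumset A1) \<ge> 3"
        by (simp_all add: card_restricted_sumset_ge_7 card_restricted_sumset_ge_3)
      then show ?thesis by linarith
    qed
    moreover have "card A2 \<ge> 2" using 3 sorted total by linarith
    ultimately obtain P Q R where "P \<subseteq> A0" "card P = 2" "Q \<subseteq> A1" "card Q = 2" "R \<subseteq> A2"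
      "card R = 2" "\<Sum>P + \<Sum>Q + \<Sum>R = 0"
      using exists_zero_sum_pairs_if_card_restricted_sumsets[of A0 A1 A2] by fastforce
    then show ?thesis by (intro zero_sum_selectionI[of P _ Q _ R _ "{}"]) simp_all
  qed
qed

lemma zero_sum_selection_if_card_sum_13:
  assumes "card A0 + card A1 + card A2 + card A3 = 13"
  shows "zero_sum_selection A0 A1 A2 A3"
proof -
  have "card A0 + card A1 + card A2 + card A3 = 13 \<longrightarrow> zero_sum_selection A0 A1 A2 A3"
  proof (rule sorted_wlog4[where f = card])
    fix A0 A1 A2 A3 :: "(3 \<times> 3) set"
    show "card A1 \<le> card A0 \<Longrightarrow> card A2 \<le> card A1 \<Longrightarrow> card A3 \<le> card A2 \<Longrightarrow>
        card A0 + card A1 + card A2 + card A3 = 13 \<longrightarrow> zero_sum_selection A0 A1 A2 A3"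
      using zero_sum_selection_if_sorted by blast
  qed (auto simp: ac_simps intro: zero_sum_selection_swap01 zero_sum_selection_swap12
      zero_sum_selection_swap23)
  then show ?thesis using assms by blast
qed

section \<open>Lifting to \<open>\<int>\<^sub>6\<^sup>2\<close>\<close>

lemma UNIV_6: "(UNIV :: 6 set) = {0, 1, 2, 3, 4, 5}"
  by (rule sym, rule card_subset_eq) auto

lemma all_6: "(\<forall>a :: 6. P a) \<longleftrightarrow> P 0 \<and> P 1 \<and> P 2 \<and> P 3 \<and> P 4 \<and> P 5"
  by (metis UNIV_6 UNIV_I empty_iff insert_iff)

lemma of_nat_6_eq_0_iff:
  assumes "n \<le> 6"
  shows "(of_nat n :: 6) = 0 \<longleftrightarrow> n = 0 \<or> n = 6"
proof -
  have "n = 0 \<or> n = 1 \<or> n = 2 \<or> n = 3 \<or> n = 4 \<or> n = 5 \<or> n = 6" using assms by arith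
  then show ?thesis by (elim disjE) simp_all
qed

definition mod3 :: "6 \<Rightarrow> 3" where
  "mod3 a = of_int (Rep_bit0 a)"

lemma mod3_add: "mod3 (a + b) = mod3 a + mod3 b"
proof -
  have "\<forall>a b. mod3 (a + b) = mod3 a + mod3 b"
    unfolding all_6 mod3_def by (simp add: bit0.Rep_numeral bit0.Rep_0 bit0.Rep_1)
  then show ?thesis by blast
qed

lemma mod3_0: "mod3 0 = 0"
  unfolding mod3_def by (simp add: bit0.Rep_0)

lemma triple_6_cases: "(a :: 6) + a + a = 0 \<or> a + a + a = 3"
proof -
  have "\<forall>a :: 6. a + a + a = 0 \<or> a + a + a = 3" unfolding all_6 by simp
  then show ?thesis by blast
qed

text \<open>Chinese remainder theorem for \<open>\<int>\<^sub>6\<close>: \<open>3a\<close> determines \<open>a\<close> mod 2.\<close>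

lemma eq_if_triple_eq_mod3_eq: "(a :: 6) + a + a = b + b + b \<Longrightarrow> mod3 a = mod3 b \<Longrightarrow> a = b"
proof -
  have "\<forall>a b :: 6. a + a + a = b + b + b \<longrightarrow> mod3 a = mod3 b \<longrightarrow> a = b"
    unfolding all_6 mod3_def by (simp add: bit0.Rep_numeral bit0.Rep_0 bit0.Rep_1)
  then show "a + a + a = b + b + b \<Longrightarrow> mod3 a = mod3 b \<Longrightarrow> a = b" by blast
qed

text \<open>\<open>two_part\<close> projects \<open>\<int>\<^sub>6\<^sup>2\<close> onto its 2-torsion \<open>{0, 3}\<^sup>2\<close>; together with reduction mod 3 it
  realises \<open>\<int>\<^sub>6\<^sup>2 \<cong> \<int>\<^sub>2\<^sup>2 \<times> \<int>\<^sub>3\<^sup>2\<close>.\<close>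

definition two_part :: "6 \<times> 6 \<Rightarrow> 6 \<times> 6" where
  "two_part x = x + x + x"

abbreviation mod3_pair :: "6 \<times> 6 \<Rightarrow> 3 \<times> 3" where
  "mod3_pair \<equiv> map_prod mod3 mod3"

lemma mod3_pair_add: "mod3_pair (x + y) = mod3_pair x + mod3_pair y"
  by (cases x, cases y) (simp add: mod3_add)

lemma mod3_pair_sum: "mod3_pair (\<Sum>S) = (\<Sum>x\<in>S. mod3_pair x)"
  by (induction S rule: infinite_finite_induct) (simp_all add: mod3_pair_add mod3_0 zero_prod_def)

lemma two_part_add: "two_part (x + y) = two_part x + two_part y"
  unfolding two_part_def by (simp add: ac_simps)

lemma two_part_sum: "two_part (\<Sum>S) = (\<Sum>x\<in>S. two_part x)"
  unfolding two_part_def by (simp add: sum.distrib)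

lemma two_part_cases: "two_part x \<in> {(0, 0), (0, 3), (3, 0), (3, 3)}"
  using triple_6_cases[of "fst x"] triple_6_cases[of "snd x"]
  by (cases x) (auto simp: two_part_def)

lemma eq_if_two_part_mod3_pair_eq:
  assumes "two_part x = two_part y" "mod3_pair x = mod3_pair y"
  shows "x = y"
proof -
  obtain a b c d where xy: "x = (a, b)" "y = (c, d)" by (cases x, cases y)
  have "a + a + a = c + c + c" "b + b + b = d + d + d" "mod3 a = mod3 c" "mod3 b = mod3 d"
    using assms unfolding two_part_def xy by simp_all
  then show ?thesis using eq_if_triple_eq_mod3_eq xy by simp
qed

definition two_part_fiber :: "(6 \<times> 6) set \<Rightarrow> 6 \<times> 6 \<Rightarrow> (6 \<times> 6) set" where
  "two_part_fiber X k = {x\<in>X. two_part x = k}"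

lemma two_part_fiber_disjoint: "k \<noteq> k' \<Longrightarrow> two_part_fiber X k \<inter> two_part_fiber X k' = {}"
  unfolding two_part_fiber_def by blast

lemma inj_on_mod3_pair_fiber: "inj_on mod3_pair (two_part_fiber X k)"
  unfolding two_part_fiber_def by (rule inj_onI) (simp add: eq_if_two_part_mod3_pair_eq)

lemma lift_from_fiber:
  assumes "B \<subseteq> mod3_pair ` two_part_fiber X k" and "k + k = 0"
  obtains S where "S \<subseteq> two_part_fiber X k" "card S = card B" "mod3_pair (\<Sum>S) = \<Sum>B"
    "two_part (\<Sum>S) = (if even (card B) then 0 else k)"
proof -
  let ?S = "{x\<in>two_part_fiber X k. mod3_pair x \<in> B}"
  have inj: "inj_on mod3_pair ?S"
    using inj_on_mod3_pair_fiber[of X k] by (rule inj_on_subset) blast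
  have image: "mod3_pair ` ?S = B"
  proof
    show "B \<subseteq> mod3_pair ` ?S"
    proof
      fix b assume b: "b \<in> B"
      with assms(1) have "b \<in> mod3_pair ` two_part_fiber X k" by (rule subsetD)
      then obtain x where "x \<in> two_part_fiber X k" "b = mod3_pair x" by (rule imageE) blast
      then show "b \<in> mod3_pair ` ?S" using b by (intro rev_image_eqI[of x]) simp_all
    qed
  qed (rule image_subsetI, simp)
  have "card ?S = card B" using card_image[OF inj] image by simp
  moreover have "mod3_pair (\<Sum>?S) = \<Sum>B"
    using sum.reindex[OF inj, of id] image by (simp add: mod3_pair_sum)
  moreover have "two_part (\<Sum>?S) = (if even (card B) then 0 else k)"
    using sum_const_order_two[OF assms(2), of ?S] \<open>card ?S = card B\<close>
    by (simp add: two_part_sum two_part_fiber_def)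
  ultimately show ?thesis by (intro that) auto
qed

lemma card_sum_Un4_disjoint:
  fixes S0 S1 S2 S3 :: "'a::comm_monoid_add set"
  assumes "finite S0" "finite S1" "finite S2" "finite S3"
    "S0 \<inter> S1 = {}" "S0 \<inter> S2 = {}" "S0 \<inter> S3 = {}" "S1 \<inter> S2 = {}" "S1 \<inter> S3 = {}" "S2 \<inter> S3 = {}"
  shows "card (S0 \<union> S1 \<union> S2 \<union> S3) = card S0 + card S1 + card S2 + card S3"
    and "\<Sum>(S0 \<union> S1 \<union> S2 \<union> S3) = \<Sum>S0 + \<Sum>S1 + \<Sum>S2 + \<Sum>S3"
  using assms by (simp_all add: card_Un_disjoint sum.union_disjoint Int_Un_distrib2)

lemma card_eq_sum_card_two_part_fibers:
  fixes X :: "(6 \<times> 6) set"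
  shows "card X = card (two_part_fiber X (0, 0)) + card (two_part_fiber X (0, 3))
    + card (two_part_fiber X (3, 0)) + card (two_part_fiber X (3, 3))"
proof -
  have "X = two_part_fiber X (0, 0) \<union> two_part_fiber X (0, 3) \<union> two_part_fiber X (3, 0)
      \<union> two_part_fiber X (3, 3)"
    unfolding two_part_fiber_def using two_part_cases by blast
  moreover have "two_part_fiber X (0, 0) \<inter> two_part_fiber X (0, 3) = {}"
    "two_part_fiber X (0, 0) \<inter> two_part_fiber X (3, 0) = {}"
    "two_part_fiber X (0, 0) \<inter> two_part_fiber X (3, 3) = {}"
    "two_part_fiber X (0, 3) \<inter> two_part_fiber X (3, 0) = {}"
    "two_part_fiber X (0, 3) \<inter> two_part_fiber X (3, 3) = {}"
    "two_part_fiber X (3, 0) \<inter> two_part_fiber X (3, 3) = {}"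
    by (simp_all add: two_part_fiber_disjoint)
  note card_sum_Un4_disjoint(1)[OF finite finite finite finite this]
  ultimately show ?thesis by simp
qed

lemma exists_zero_sum_6_subset_if_zero_sum_selection:
  fixes X :: "(6 \<times> 6) set"
  assumes "zero_sum_selection (mod3_pair ` two_part_fiber X (0, 0)) (mod3_pair ` two_part_fiber X (0, 3))
    (mod3_pair ` two_part_fiber X (3, 0)) (mod3_pair ` two_part_fiber X (3, 3))"
  shows "\<exists>S\<subseteq>X. card S = 6 \<and> \<Sum>S = 0"
proof -
  obtain B0 B1 B2 B3 where B: "B0 \<subseteq> mod3_pair ` two_part_fiber X (0, 0)"
    "B1 \<subseteq> mod3_pair ` two_part_fiber X (0, 3)" "B2 \<subseteq> mod3_pair ` two_part_fiber X (3, 0)"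
    "B3 \<subseteq> mod3_pair ` two_part_fiber X (3, 3)"
    "card B0 + card B1 + card B2 + card B3 = 6"
    "(even (card B0) \<and> even (card B1) \<and> even (card B2) \<and> even (card B3)) \<or>
      (odd (card B0) \<and> odd (card B1) \<and> odd (card B2) \<and> odd (card B3))"
    "\<Sum>B0 + \<Sum>B1 + \<Sum>B2 + \<Sum>B3 = 0"
    using assms unfolding zero_sum_selection_def by blast
  obtain S0 where S0: "S0 \<subseteq> two_part_fiber X (0, 0)" "card S0 = card B0" "mod3_pair (\<Sum>S0) = \<Sum>B0"
    "two_part (\<Sum>S0) = (if even (card B0) then 0 else (0, 0))"
    by (rule lift_from_fiber[OF B(1)]) (simp_all add: zero_prod_def)
  obtain S1 where S1: "S1 \<subseteq> two_part_fiber X (0, 3)" "card S1 = card B1" "mod3_pair (\<Sum>S1) = \<Sum>B1"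
    "two_part (\<Sum>S1) = (if even (card B1) then 0 else (0, 3))"
    by (rule lift_from_fiber[OF B(2)]) (simp_all add: zero_prod_def)
  obtain S2 where S2: "S2 \<subseteq> two_part_fiber X (3, 0)" "card S2 = card B2" "mod3_pair (\<Sum>S2) = \<Sum>B2"
    "two_part (\<Sum>S2) = (if even (card B2) then 0 else (3, 0))"
    by (rule lift_from_fiber[OF B(3)]) (simp_all add: zero_prod_def)
  obtain S3 where S3: "S3 \<subseteq> two_part_fiber X (3, 3)" "card S3 = card B3" "mod3_pair (\<Sum>S3) = \<Sum>B3"
    "two_part (\<Sum>S3) = (if even (card B3) then 0 else (3, 3))"
    by (rule lift_from_fiber[OF B(4)]) (simp_all add: zero_prod_def)
  let ?S = "S0 \<union> S1 \<union> S2 \<union> S3"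
  have disjoint: "A \<inter> A' = {}"
    if "A \<subseteq> two_part_fiber X k" "A' \<subseteq> two_part_fiber X k'" "k \<noteq> k'" for A A' k k'
    using that two_part_fiber_disjoint[of k k' X] by blast
  have "S0 \<inter> S1 = {}" "S0 \<inter> S2 = {}" "S0 \<inter> S3 = {}" "S1 \<inter> S2 = {}" "S1 \<inter> S3 = {}"
    "S2 \<inter> S3 = {}"
    by (rule disjoint[OF S0(1) S1(1)] disjoint[OF S0(1) S2(1)] disjoint[OF S0(1) S3(1)]
        disjoint[OF S1(1) S2(1)] disjoint[OF S1(1) S3(1)] disjoint[OF S2(1) S3(1)], simp)+
  note union = card_sum_Un4_disjoint[OF finite finite finite finite this]
  have "mod3_pair (\<Sum>?S) = 0"
    using B(7) S0(3) S1(3) S2(3) S3(3) unfolding union(2) mod3_pair_add by simp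
  moreover have "two_part (\<Sum>?S) = 0"
    using B(6)
  proof (elim disjE conjE)
    assume "odd (card B0)" "odd (card B1)" "odd (card B2)" "odd (card B3)"
    then show ?thesis using S0(4) S1(4) S2(4) S3(4) unfolding union(2) two_part_add
      by (simp add: zero_prod_def)
  qed (use S0(4) S1(4) S2(4) S3(4) in \<open>simp add: union(2) two_part_add\<close>)
  moreover have "two_part 0 = 0" "mod3_pair 0 = 0"
    by (simp_all add: two_part_def mod3_0 zero_prod_def)
  ultimately have "\<Sum>?S = 0" using eq_if_two_part_mod3_pair_eq[of "\<Sum>?S" 0] by simp
  moreover have "?S \<subseteq> X" using S0(1) S1(1) S2(1) S3(1) unfolding two_part_fiber_def by blast
  moreover have "card ?S = 6" using union(1) B(5) S0(2) S1(2) S2(2) S3(2) by simp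
  ultimately show ?thesis by (intro exI[of _ ?S]) simp
qed

lemma exists_zero_sum_6_subset:
  fixes X :: "(6 \<times> 6) set"
  assumes "card X = 13"
  shows "\<exists>S\<subseteq>X. card S = 6 \<and> \<Sum>S = 0"
  using assms card_eq_sum_card_two_part_fibers[of X]
  by (intro exists_zero_sum_6_subset_if_zero_sum_selection zero_sum_selection_if_card_sum_13)
    (simp add: card_image inj_on_mod3_pair_fiber)

section \<open>The constant \<open>g(\<int>\<^sub>6\<^sup>2)\<close>\<close>

lemma group_exp_6_6: "group_exp TYPE(6 \<times> 6) = 6"
  unfolding group_exp_def
proof (rule Least_equality)
  have "(\<Sum>i<6::nat. x) = 0" for x :: "6 \<times> 6"
  proof -
    have "\<forall>a :: 6. a + a + a + a + a + a = 0" unfolding all_6 by simp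
    then show ?thesis by (cases x) (simp add: numeral_eq_Suc zero_prod_def ac_simps)
  qed
  then show "0 < (6::nat) \<and> (\<forall>x :: 6 \<times> 6. (\<Sum>i<6::nat. x) = 0)" by simp
next
  fix m :: nat
  assume m: "0 < m \<and> (\<forall>x :: 6 \<times> 6. (\<Sum>i<m. x) = 0)"
  then have "fst (\<Sum>i<m. ((1 :: 6), (0 :: 6))) = 0" by (simp add: zero_prod_def)
  then have "(of_nat m :: 6) = 0" by (simp add: fst_sum)
  then show "6 \<le> m" using m of_nat_6_eq_0_iff[of m] by linarith
qed

text \<open>A zero-sum 6-subset of \<open>{0, 1} \<times> \<int>\<^sub>6\<close> has first coordinates summing to
  \<open>|S \<inter> ({1} \<times> \<int>\<^sub>6)| = 0\<close> in \<open>\<int>\<^sub>6\<close>, so it is a full row \<open>{r} \<times> \<int>\<^sub>6\<close>; but the second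
  coordinates of a row sum to \<open>0 + 1 + \<dots> + 5 = 3\<close>.\<close>

lemma in_one_row_if_zero_sum:
  fixes S :: "(6 \<times> 6) set"
  assumes S: "S \<subseteq> {0, 1} \<times> UNIV" and card: "card S = 6" and zero: "\<Sum>S = 0"
  obtains r where "S = {r} \<times> UNIV"
proof -
  define S1 where "S1 = {x\<in>S. fst x = 1}"
  have sub: "S1 \<subseteq> S" unfolding S1_def by blast
  have "fst (\<Sum>S) = (\<Sum>x\<in>S. fst x)" by (simp add: fst_sum)
  also have "\<dots> = (\<Sum>x\<in>S1. fst x) + (\<Sum>x\<in>S - S1. fst x)"
    using sum.subset_diff[OF sub] by (simp add: add.commute)
  also have "\<dots> = of_nat (card S1)"
  proof -
    have "(\<Sum>x\<in>S1. fst x) = (\<Sum>x\<in>S1. 1)" unfolding S1_def by (intro sum.cong) auto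
    moreover have "(\<Sum>x\<in>S - S1. fst x) = 0"
      using S unfolding S1_def by (intro sum.neutral) auto
    ultimately show ?thesis by simp
  qed
  finally have "(of_nat (card S1) :: 6) = 0" using zero by (simp add: zero_prod_def)
  moreover have "card S1 \<le> 6" using card_mono[OF _ sub] card by simp
  ultimately have "card S1 = 0 \<or> card S1 = 6" using of_nat_6_eq_0_iff by blast
  then have "S1 = {} \<or> S1 = S" using card_subset_eq[OF _ sub] card by auto
  then obtain r :: 6 where r: "S \<subseteq> {r} \<times> UNIV"
  proof
    assume "S1 = {}"
    then have "S \<subseteq> {0} \<times> UNIV" using S unfolding S1_def by auto
    then show ?thesis by (rule that)
  next
    assume "S1 = S"
    then have "S \<subseteq> {1} \<times> UNIV" unfolding S1_def by (auto simp: set_eq_iff)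
    then show ?thesis by (rule that)
  qed
  moreover have "card ({r} \<times> (UNIV :: 6 set)) = 6" by (simp add: card_cartesian_product)
  ultimately have "S = {r} \<times> UNIV" using card card_subset_eq[of "{r} \<times> UNIV" S] by simp
  then show ?thesis by (rule that)
qed

lemma snd_sum_row: "snd (\<Sum>({r} \<times> (UNIV :: 6 set))) = 3"
proof -
  have "{r} \<times> (UNIV :: 6 set) = Pair r ` UNIV" by auto
  then have "snd (\<Sum>({r} \<times> (UNIV :: 6 set))) = (\<Sum>b\<in>(UNIV :: 6 set). b)"
    by (simp add: sum.reindex inj_on_def snd_sum)
  also have "\<dots> = 3" unfolding UNIV_6 by simp
  finally show ?thesis .
qed

lemma no_zero_sum_6_subset_of_two_rows:
  fixes S :: "(6 \<times> 6) set"
  assumes "S \<subseteq> {0, 1} \<times> UNIV" and "card S = 6"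
  shows "\<Sum>S \<noteq> 0"
proof
  assume zero: "\<Sum>S = 0"
  obtain r where "S = {r} \<times> UNIV" using assms zero by (rule in_one_row_if_zero_sum)
  then show False using zero snd_sum_row[of r] by (simp add: zero_prod_def)
qed

lemma g_const_6_6: "g_const TYPE(6 \<times> 6) = 13"
  unfolding g_const_def group_exp_6_6
proof (rule Least_equality)
  show "0 < (13::nat) \<and> (\<forall>X :: (6 \<times> 6) set. 13 \<le> card X \<longrightarrow> has_zero_sum_subset 6 X)"
  proof (intro conjI allI impI)
    fix X :: "(6 \<times> 6) set"
    assume "13 \<le> card X"
    then obtain Y where Y: "Y \<subseteq> X" "card Y = 13" by (rule obtain_subset_with_card_n)
    then obtain S where "S \<subseteq> Y" "card S = 6" "\<Sum>S = 0"
      using exists_zero_sum_6_subset by blast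
    then show "has_zero_sum_subset 6 X"
      unfolding has_zero_sum_subset_def using Y(1) by (intro exI[of _ S]) auto
  qed simp
next
  fix t :: nat
  assume t: "0 < t \<and> (\<forall>X :: (6 \<times> 6) set. t \<le> card X \<longrightarrow> has_zero_sum_subset 6 X)"
  show "13 \<le> t"
  proof (rule ccontr)
    assume "\<not> 13 \<le> t"
    moreover have "card {0, 1 :: 6} = 2" by simp
    ultimately have "t \<le> card ({0, 1 :: 6} \<times> (UNIV :: 6 set))"
      by (simp add: card_cartesian_product)
    then have "has_zero_sum_subset 6 ({0, 1 :: 6} \<times> (UNIV :: 6 set))" using t by blast
    then obtain S :: "(6 \<times> 6) set" where "S \<subseteq> {0, 1} \<times> UNIV" "card S = 6" "\<Sum>S = 0"
      unfolding has_zero_sum_subset_def by blast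
    then show False using no_zero_sum_6_subset_of_two_rows by blast
  qed
qed

theorem theorem4p1:
  shows "(\<forall>X::(6 \<times> 6) set. card X = 13 \<longrightarrow>
            (\<exists>S. S \<subseteq> X \<and> card S = 6 \<and> (\<Sum>s\<in>S. s) = (0, 0)))
         \<and> g_const TYPE(6 \<times> 6) = 13"
  using exists_zero_sum_6_subset g_const_6_6 by (auto simp flip: zero_prod_def)

end
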